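(* There exists a family of CNFs $(\Delta_n)_{n \ge 3}$, where $\Delta_n$ has $n^3$ clauses, such that: (i) the primal treewidth of $\Delta_n$ is at least $n$ (in particular unbounded), and (ii) applying the BVA transformation 2 times to $\Delta_n$ can generate a CNF whose primal treewidth is at most 2.
   Context: BVA transformation: given a CNF $\Delta$ and a fresh variable $Y$ not occurring in $\Delta$, choose a set $C_Y = \{Y \vee \alpha_1,\ldots, Y\vee \alpha_m\}$ of clauses containing literal $Y$ and a set $C_{\neg Y} = \{\neg Y \vee \beta_1,\ldots,\neg Y\vee\beta_k\}$ of clauses containing $\neg Y$ (with $\alpha_i,\beta_j$ clauses over variables of $\Delta$) such that the set of resolvents $C_Y \bowtie C_{\neg Y} = \{\alpha_i \vee \beta_j\}$ is contained in the clauses of $\Delta$ and $|C_Y \bowtie C_{\neg Y}| > |C_Y| + |C_{\neg Y}|$; the result is $\Delta$ with the clauses $C_Y \bowtie C_{\neg Y}$ removed and the clauses $C_Y \cup C_{\neg Y}$ added. Primal treewidth: a jointree for a CNF $\Delta$ is a tree whose vertices are labeled with subsets (clusters) of the variables of $\Delta$ such that (i) for each clause some cluster contains all its variables, and (ii) if a variable appears in two clusters then it appears in every cluster on the path between them. The width of a jointree is its largest cluster size minus 1; the primal treewidth of $\Delta$ is the minimum width over its jointrees. *)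

theory Defs
  imports Main
begin

datatype 'v lit = Pos 'v | Neg 'v

fun var :: "'v lit \<Rightarrow> 'v" where
  "var (Pos x) = x" | "var (Neg x) = x"

type_synonym 'v clause = "'v lit set"
type_synonym 'v cnf = "'v clause set"

definition vars_cl :: "'v clause \<Rightarrow> 'v set" where
  "vars_cl C = var ` C"

definition vars :: "'v cnf \<Rightarrow> 'v set" where
  "vars \<Delta> = (\<Union>C\<in>\<Delta>. vars_cl C)"

definition is_cnf :: "'v cnf \<Rightarrow> bool" where
  "is_cnf \<Delta> \<longleftrightarrow> finite \<Delta> \<and> (\<forall>C\<in>\<Delta>. finite C)"

text \<open>Resolvents of C_Y = {Y \<or> \<alpha> | \<alpha> \<in> A} and C_{\<not>Y} = {\<not>Y \<or> \<beta> | \<beta> \<in> B}.\<close>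
definition resolvents :: "'v clause set \<Rightarrow> 'v clause set \<Rightarrow> 'v clause set" where
  "resolvents A B = {\<alpha> \<union> \<beta> | \<alpha> \<beta>. \<alpha> \<in> A \<and> \<beta> \<in> B}"

definition bva_step :: "'v cnf \<Rightarrow> 'v cnf \<Rightarrow> bool" where
  "bva_step \<Delta> \<Delta>' \<longleftrightarrow>
     (\<exists>Y A B.
        Y \<notin> vars \<Delta> \<and>
        finite A \<and> finite B \<and>
        (\<forall>\<alpha>\<in>A. finite \<alpha> \<and> vars_cl \<alpha> \<subseteq> vars \<Delta>) \<and>
        (\<forall>\<beta>\<in>B. finite \<beta> \<and> vars_cl \<beta> \<subseteq> vars \<Delta>) \<and>
        resolvents A B \<subseteq> \<Delta> \<and>
        card (resolvents A B) > card (insert (Pos Y) ` A) + card (insert (Neg Y) ` B) \<and>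
        \<Delta>' = (\<Delta> - resolvents A B) \<union> (insert (Pos Y) ` A) \<union> (insert (Neg Y) ` B))"

definition is_path :: "nat set set \<Rightarrow> nat list \<Rightarrow> nat \<Rightarrow> nat \<Rightarrow> bool" where
  "is_path E p u v \<longleftrightarrow> p \<noteq> [] \<and> hd p = u \<and> last p = v \<and> distinct p \<and>
     (\<forall>i. Suc i < length p \<longrightarrow> {p ! i, p ! Suc i} \<in> E)"

definition is_tree :: "nat set \<Rightarrow> nat set set \<Rightarrow> bool" where
  "is_tree V E \<longleftrightarrow> finite V \<and> V \<noteq> {} \<and>
     (\<forall>e\<in>E. \<exists>u v. u \<in> V \<and> v \<in> V \<and> u \<noteq> v \<and> e = {u, v}) \<and>
     (\<forall>u\<in>V. \<forall>v\<in>V. \<exists>p. is_path E p u v) \<and>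
     card E + 1 = card V"

definition jointree :: "'v cnf \<Rightarrow> nat set \<Rightarrow> nat set set \<Rightarrow> (nat \<Rightarrow> 'v set) \<Rightarrow> bool" where
  "jointree \<Delta> V E \<chi> \<longleftrightarrow> is_tree V E \<and>
     (\<forall>t\<in>V. \<chi> t \<subseteq> vars \<Delta>) \<and>
     (\<forall>C\<in>\<Delta>. \<exists>t\<in>V. vars_cl C \<subseteq> \<chi> t) \<and>
     (\<forall>x u v p. u \<in> V \<and> v \<in> V \<and> x \<in> \<chi> u \<and> x \<in> \<chi> v \<and> is_path E p u v
        \<longrightarrow> (\<forall>w\<in>set p. x \<in> \<chi> w))"

definition jt_width :: "nat set \<Rightarrow> (nat \<Rightarrow> 'v set) \<Rightarrow> nat" where
  "jt_width V \<chi> = Max ((\<lambda>t. card (\<chi> t)) ` V) - 1"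

definition primal_tw :: "'v cnf \<Rightarrow> nat" where
  "primal_tw \<Delta> = (LEAST w. \<exists>V E \<chi>. jointree \<Delta> V E \<chi> \<and> jt_width V \<chi> = w)"

end

theory Submission
  imports Defs
begin

text \<open>
  The lower bound is the clique argument for treewidth: the subtrees of a jointree whose bags
  contain a fixed variable are convex, so by the Helly property of convex sets in a tree
  pairwise intersecting ones share a bag; hence every clique of the primal graph lies in a
  single bag. The family puts all clauses \<open>x \<or> \<not>y\<close> with \<open>x, y\<close> ranging over \<open>n + 1\<close> variables
  into \<open>\<Delta>\<^sub>n\<close>, a clique of size \<open>n + 1\<close>. One BVA step with a fresh \<open>Y\<close> factors these
  \<open>(n + 1)\<^sup>2\<close> clauses into the \<open>2(n + 1)\<close> clauses \<open>Y \<or> x\<close> and \<open>\<not>Y \<or> \<not>y\<close>, and a second one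
  does the same to a small \<open>2 \<times> 3\<close> block. Afterwards every clause mentions at most one variable
  besides the two fresh ones, so a star whose bags are the two fresh variables plus one more is a
  jointree of width 2.
\<close>

fun edge_chain :: "nat set set \<Rightarrow> nat list \<Rightarrow> bool" where
  "edge_chain E (x # y # zs) \<longleftrightarrow> {x, y} \<in> E \<and> edge_chain E (y # zs)"
| "edge_chain E _ \<longleftrightarrow> True"

lemma edge_chain_iff_nth:
  "edge_chain E p \<longleftrightarrow> (\<forall>i. Suc i < length p \<longrightarrow> {p ! i, p ! Suc i} \<in> E)"
proof (induction E p rule: edge_chain.induct)
  case (1 E x y zs)
  then show ?case by (auto simp: nth_Cons less_Suc_eq_0_disj split: nat.split)
qed auto

lemma edge_chain_append:
  "edge_chain E (xs @ ys) \<longleftrightarrow>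
     edge_chain E xs \<and> edge_chain E ys \<and> (xs \<noteq> [] \<and> ys \<noteq> [] \<longrightarrow> {last xs, hd ys} \<in> E)"
proof (induction xs)
  case (Cons a xs)
  then show ?case by (cases xs; cases ys) auto
qed auto

lemma edge_chain_rev: "edge_chain E (rev xs) \<longleftrightarrow> edge_chain E xs"
proof (induction E xs rule: edge_chain.induct)
  case (1 E x y zs)
  then show ?case by (simp add: edge_chain_append last_rev insert_commute) blast
qed auto

lemma is_path_iff_edge_chain:
  "is_path E p u v \<longleftrightarrow> p \<noteq> [] \<and> hd p = u \<and> last p = v \<and> distinct p \<and> edge_chain E p"
  unfolding is_path_def edge_chain_iff_nth by blast

lemma is_path_loop: "is_path E p u u \<Longrightarrow> p = [u]"
  by (cases p) (auto simp: is_path_def split: if_splits)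

lemma set_path_subset:
  assumes "is_path E p u v" "u \<in> V" "\<forall>e\<in>E. e \<subseteq> V"
  shows "set p \<subseteq> V"
proof
  fix w assume "w \<in> set p"
  then obtain i where i: "i < length p" "p ! i = w" by (auto simp: in_set_conv_nth)
  show "w \<in> V"
  proof (cases i)
    case 0
    then show ?thesis using assms i by (cases p) (auto simp: is_path_def)
  next
    case (Suc j)
    then have "{p ! j, p ! Suc j} \<in> E" using assms(1) i by (auto simp: is_path_def)
    then show ?thesis using assms(3) i Suc by auto
  qed
qed

lemma path_via_common_vertex:
  assumes P: "is_path E P a b" and Q: "is_path E Q a c"
  obtains m R where "m \<in> set P" "m \<in> set Q" "m \<in> set R" "is_path E R b c"
proof -
  have "hd P \<in> set Q" using P Q hd_in_set[of Q] by (auto simp: is_path_iff_edge_chain)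
  moreover have "hd P \<in> set P" using P by (auto simp: is_path_iff_edge_chain)
  ultimately obtain P1 m P2 where Ps: "P = P1 @ m # P2" "m \<in> set Q" "\<forall>z\<in>set P2. z \<notin> set Q"
    using split_list_last_prop[of P "\<lambda>x. x \<in> set Q"] by blast
  obtain Q1 Q2 where Qs: "Q = Q1 @ m # Q2" using Ps(2) split_list by metis
  \<comment> \<open>\<open>m\<close> is the last vertex of \<open>P\<close> on \<open>Q\<close>, so the two halves of \<open>R\<close> are disjoint.\<close>
  define R where "R = rev P2 @ m # Q2"
  have "edge_chain E (m # P2)" "edge_chain E (m # Q2)"
    using P Q Ps(1) Qs by (auto simp: is_path_iff_edge_chain edge_chain_append)
  then have "edge_chain E R"
    unfolding R_def using edge_chain_rev[of E "m # P2"] by (simp add: edge_chain_append)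
  moreover have "hd R = b"
    using P Ps(1) by (cases P2) (auto simp: R_def is_path_iff_edge_chain hd_rev)
  moreover have "last R = c"
    using Q Qs by (auto simp: R_def is_path_iff_edge_chain)
  moreover have "distinct R"
    using P Q Ps Qs by (auto simp: R_def is_path_iff_edge_chain)
  ultimately have "is_path E R b c" by (simp add: is_path_iff_edge_chain R_def)
  then show thesis using Ps Qs by (intro that[of m R]) (auto simp: R_def)
qed

definition path_convex :: "nat set \<Rightarrow> nat set set \<Rightarrow> nat set \<Rightarrow> bool" where
  "path_convex V E S \<longleftrightarrow> S \<subseteq> V \<and> (\<forall>u\<in>S. \<forall>v\<in>S. \<forall>p. is_path E p u v \<longrightarrow> set p \<subseteq> S)"

lemma path_convex_path_subset:
  "path_convex V E S \<Longrightarrow> u \<in> S \<Longrightarrow> v \<in> S \<Longrightarrow> is_path E p u v \<Longrightarrow> set p \<subseteq> S"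
  unfolding path_convex_def by blast

lemma path_convex_Int: "path_convex V E A \<Longrightarrow> path_convex V E B \<Longrightarrow> path_convex V E (A \<inter> B)"
  unfolding path_convex_def by blast

lemma path_convex_Helly3:
  assumes conn: "\<forall>u\<in>V. \<forall>v\<in>V. \<exists>p. is_path E p u v"
    and A: "path_convex V E A" and B: "path_convex V E B" and C: "path_convex V E C"
    and "A \<inter> B \<noteq> {}" "A \<inter> C \<noteq> {}" "B \<inter> C \<noteq> {}"
  shows "A \<inter> B \<inter> C \<noteq> {}"
proof -
  obtain a b c where a: "a \<in> B \<inter> C" and b: "b \<in> A \<inter> C" and c: "c \<in> A \<inter> B"
    using assms by blast
  then have "a \<in> V" "b \<in> V" "c \<in> V" using A B by (auto simp: path_convex_def)
  then obtain P Q where P: "is_path E P a b" and Q: "is_path E Q a c" using conn by blast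
  then obtain m R where m: "m \<in> set P" "m \<in> set Q" "m \<in> set R" and R: "is_path E R b c"
    by (rule path_via_common_vertex)
  have "m \<in> A" using path_convex_path_subset[OF A _ _ R] b c m(3) by blast
  moreover have "m \<in> B" using path_convex_path_subset[OF B _ _ Q] a c m(2) by blast
  moreover have "m \<in> C" using path_convex_path_subset[OF C _ _ P] a b m(1) by blast
  ultimately show ?thesis by blast
qed

lemma path_convex_Helly:
  assumes conn: "\<forall>u\<in>V. \<forall>v\<in>V. \<exists>p. is_path E p u v"
    and "finite F" "F \<noteq> {}" "\<forall>S\<in>F. path_convex V E S" "\<forall>S\<in>F. \<forall>T\<in>F. S \<inter> T \<noteq> {}"
  shows "\<Inter>F \<noteq> {}"
  using assms(2-)
proof (induction "card F" arbitrary: F rule: less_induct)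
  case less
  then obtain A where A: "A \<in> F" by blast
  show ?case
  proof (cases "F = {A}")
    case True
    then show ?thesis using less.prems(4) by simp
  next
    case False
    define F' where "F' = (\<lambda>S. A \<inter> S) ` (F - {A})"
    have ne: "F - {A} \<noteq> {}" using A False by blast
    have "card F' \<le> card (F - {A})" unfolding F'_def by (rule card_image_le) (use less.prems in simp)
    also have "\<dots> < card F" using less.prems(1) A by (rule card_Diff1_less)
    finally have "card F' < card F" .
    moreover have "finite F'" "F' \<noteq> {}" using less.prems(1) ne by (auto simp: F'_def)
    moreover have "\<forall>S\<in>F'. path_convex V E S"
      using less.prems(3) A by (auto simp: F'_def intro: path_convex_Int)
    moreover have "\<forall>S\<in>F'. \<forall>T\<in>F'. S \<inter> T \<noteq> {}"
    proof (intro ballI)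
      fix S T assume "S \<in> F'" "T \<in> F'"
      then obtain S0 T0 where "S0 \<in> F" "T0 \<in> F" "S = A \<inter> S0" "T = A \<inter> T0" by (auto simp: F'_def)
      moreover have "A \<inter> S0 \<inter> T0 \<noteq> {}"
        using path_convex_Helly3[OF conn, of A S0 T0] less.prems(3,4) A \<open>S0 \<in> F\<close> \<open>T0 \<in> F\<close> by blast
      ultimately show "S \<inter> T \<noteq> {}" by blast
    qed
    ultimately have "\<Inter>F' \<noteq> {}" using less.hyps by blast
    moreover have "\<Inter>F' = \<Inter>F" using A ne by (auto simp: F'_def)
    ultimately show ?thesis by simp
  qed
qed

lemma jointree_clique_in_bag:
  assumes jt: "jointree \<Delta> V E \<chi>"
    and K: "finite K" "K \<noteq> {}"
    and clique: "\<forall>x\<in>K. \<forall>y\<in>K. \<exists>C\<in>\<Delta>. {x, y} \<subseteq> vars_cl C"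
  shows "\<exists>t\<in>V. K \<subseteq> \<chi> t"
proof -
  have tree: "is_tree V E" using jt unfolding jointree_def by (elim conjE)
  have cover: "\<forall>C\<in>\<Delta>. \<exists>t\<in>V. vars_cl C \<subseteq> \<chi> t" using jt unfolding jointree_def by (elim conjE)
  have running: "\<forall>x u v p. u \<in> V \<and> v \<in> V \<and> x \<in> \<chi> u \<and> x \<in> \<chi> v \<and> is_path E p u v
        \<longrightarrow> (\<forall>w\<in>set p. x \<in> \<chi> w)"
    using jt unfolding jointree_def by (elim conjE)
  have conn: "\<forall>u\<in>V. \<forall>v\<in>V. \<exists>p. is_path E p u v"
    using tree unfolding is_tree_def by (elim conjE)
  have edges: "\<forall>e\<in>E. e \<subseteq> V"
    using tree unfolding is_tree_def by (elim conjE) fastforce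
  define T where "T x = {t \<in> V. x \<in> \<chi> t}" for x
  have "path_convex V E (T x)" for x
    unfolding path_convex_def T_def
  proof (intro conjI ballI allI impI subsetI)
    fix u v p w assume "u \<in> {t \<in> V. x \<in> \<chi> t}" "v \<in> {t \<in> V. x \<in> \<chi> t}"
      "is_path E p u v" "w \<in> set p"
    with set_path_subset[OF _ _ edges] running show "w \<in> {t \<in> V. x \<in> \<chi> t}" by blast
  qed auto
  moreover have "T x \<inter> T y \<noteq> {}" if xy: "x \<in> K" "y \<in> K" for x y
  proof -
    obtain C where C: "C \<in> \<Delta>" "{x, y} \<subseteq> vars_cl C" using clique xy by meson
    obtain t where "t \<in> V" "vars_cl C \<subseteq> \<chi> t" using cover C(1) by meson
    then have "t \<in> T x \<inter> T y" using C(2) by (auto simp: T_def)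
    then show ?thesis by blast
  qed
  ultimately have "\<Inter>(T ` K) \<noteq> {}"
    using path_convex_Helly[OF conn, of "T ` K"] K by blast
  then obtain t where "\<forall>x\<in>K. t \<in> T x" by blast
  moreover obtain x where "x \<in> K" using K(2) by blast
  ultimately show ?thesis unfolding T_def by blast
qed

lemma finite_vars: "is_cnf \<Delta> \<Longrightarrow> finite (vars \<Delta>)"
  unfolding is_cnf_def vars_def vars_cl_def by auto

lemma vars_cl_insert [simp]: "vars_cl (insert l C) = insert (var l) (vars_cl C)"
  and vars_cl_empty [simp]: "vars_cl {} = {}"
  unfolding vars_cl_def by auto

lemma is_tree_star:
  assumes "finite V" "c \<in> V"
  shows "is_tree V ((\<lambda>v. {c, v}) ` (V - {c}))" (is "is_tree V ?E")
  unfolding is_tree_def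
proof (intro conjI)
  show "finite V" "V \<noteq> {}" using assms by auto
  show "\<forall>e\<in>?E. \<exists>u v. u \<in> V \<and> v \<in> V \<and> u \<noteq> v \<and> e = {u, v}" using assms by blast
  show "\<forall>u\<in>V. \<forall>v\<in>V. \<exists>p. is_path ?E p u v"
  proof (intro ballI)
    fix u v assume "u \<in> V" "v \<in> V"
    then consider "u = v" | "u = c" "v \<noteq> c" | "u \<noteq> c" "v = c" | "u \<noteq> c" "v \<noteq> c" "u \<noteq> v"
      by blast
    then show "\<exists>p. is_path ?E p u v"
    proof cases
      case 1
      then show ?thesis by (intro exI[of _ "[u]"]) (simp add: is_path_iff_edge_chain)
    next
      case 2
      then show ?thesis using \<open>v \<in> V\<close>
        by (intro exI[of _ "[u, v]"]) (auto simp: is_path_iff_edge_chain)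
    next
      case 3
      then show ?thesis using \<open>u \<in> V\<close>
        by (intro exI[of _ "[u, v]"]) (auto simp: is_path_iff_edge_chain insert_commute)
    next
      case 4
      then show ?thesis using \<open>u \<in> V\<close> \<open>v \<in> V\<close>
        by (intro exI[of _ "[u, c, v]"]) (auto simp: is_path_iff_edge_chain insert_commute)
    qed
  qed
  have "inj_on (\<lambda>v. {c, v}) (V - {c})" by (auto simp: inj_on_def doubleton_eq_iff)
  then have "card ?E = card V - 1" using assms by (simp add: card_image card_Diff_singleton)
  moreover have "card V > 0" using assms card_gt_0_iff by blast
  ultimately show "card ?E + 1 = card V" by linarith
qed

lemma jointree_single_bag: "jointree \<Delta> {0} {} (\<lambda>_. vars \<Delta>)"
proof -
  have "is_tree {0} {}" using is_tree_star[of "{0}" 0] by simp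
  then show ?thesis by (auto simp: jointree_def vars_def)
qed

lemma primal_tw_le: "jointree \<Delta> V E \<chi> \<Longrightarrow> primal_tw \<Delta> \<le> jt_width V \<chi>"
  unfolding primal_tw_def by (rule Least_le) blast

lemma primal_tw_attained: "\<exists>V E \<chi>. jointree \<Delta> V E \<chi> \<and> jt_width V \<chi> = primal_tw \<Delta>"
  unfolding primal_tw_def by (rule LeastI_ex) (use jointree_single_bag in blast)

lemma primal_tw_ge_clique:
  assumes cnf: "is_cnf \<Delta>" and K: "finite K" "K \<noteq> {}"
    and clique: "\<forall>x\<in>K. \<forall>y\<in>K. \<exists>C\<in>\<Delta>. {x, y} \<subseteq> vars_cl C"
  shows "card K \<le> primal_tw \<Delta> + 1"
proof -
  obtain V E \<chi> where jt: "jointree \<Delta> V E \<chi>" and w: "jt_width V \<chi> = primal_tw \<Delta>"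
    using primal_tw_attained by blast
  obtain t where t: "t \<in> V" "K \<subseteq> \<chi> t" using jointree_clique_in_bag[OF jt K clique] by blast
  have "finite V" using jt unfolding jointree_def is_tree_def by (elim conjE)
  have "\<chi> t \<subseteq> vars \<Delta>" using jt t(1) unfolding jointree_def by blast
  then have "card K \<le> card (\<chi> t)" using t(2) finite_vars[OF cnf] by (meson card_mono finite_subset)
  also have "\<dots> \<le> Max ((\<lambda>t. card (\<chi> t)) ` V)" using \<open>finite V\<close> t(1) by simp
  finally show ?thesis using w unfolding jt_width_def by linarith
qed

lemma primal_tw_le_hub:
  fixes \<Delta> :: "nat cnf"
  assumes cnf: "is_cnf \<Delta>" and K: "K \<subseteq> vars \<Delta>" "K \<noteq> {}"
    and hub: "\<forall>C\<in>\<Delta>. \<exists>v. vars_cl C \<subseteq> insert v K"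
  shows "primal_tw \<Delta> \<le> card K"
proof -
  define V where "V = vars \<Delta>"
  obtain c where "c \<in> K" using K(2) by blast
  define E where "E = (\<lambda>v. {c, v}) ` (V - {c})"
  define \<chi> where "\<chi> t = insert t K" for t
  have "finite V" "finite K" using finite_vars[OF cnf] K(1) by (auto simp: V_def intro: finite_subset)
  have "jointree \<Delta> V E \<chi>"
    unfolding jointree_def
  proof (intro conjI allI impI ballI)
    show "is_tree V E" unfolding E_def using is_tree_star \<open>finite V\<close> \<open>c \<in> K\<close> K(1) V_def by blast
    show "\<chi> t \<subseteq> vars \<Delta>" if "t \<in> V" for t using that K(1) by (simp add: \<chi>_def V_def)
    show "\<exists>t\<in>V. vars_cl C \<subseteq> \<chi> t" if C: "C \<in> \<Delta>" for C
    proof -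
      obtain v where v: "vars_cl C \<subseteq> insert v K" using hub C by blast
      have "vars_cl C \<subseteq> V" using C unfolding V_def vars_def by blast
      then show ?thesis
        using v \<open>c \<in> K\<close> K(1) by (cases "v \<in> vars_cl C") (auto simp: \<chi>_def V_def)
    qed
    show "x \<in> \<chi> w"
      if path: "u \<in> V \<and> v \<in> V \<and> x \<in> \<chi> u \<and> x \<in> \<chi> v \<and> is_path E p u v" and w: "w \<in> set p"
      for x u v p w
    proof (cases "x \<in> K")
      case False
      then have "u = x" "v = x" using path by (auto simp: \<chi>_def)
      then have "p = [x]" using path is_path_loop by blast
      then show ?thesis using w by (simp add: \<chi>_def)
    qed (simp add: \<chi>_def)
  qed
  moreover have "jt_width V \<chi> \<le> card K"
  proof -
    have "card (\<chi> t) \<le> card K + 1" for t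
      using card_insert_le_m1 \<open>finite K\<close> by (simp add: \<chi>_def card_insert_if)
    then have "Max ((\<lambda>t. card (\<chi> t)) ` V) \<le> card K + 1"
      using \<open>finite V\<close> \<open>c \<in> K\<close> K(1) by (subst Max_le_iff) (auto simp: V_def)
    then show ?thesis unfolding jt_width_def by linarith
  qed
  ultimately show ?thesis using primal_tw_le by (meson order_trans)
qed

definition cross_clauses :: "'v set \<Rightarrow> 'v set \<Rightarrow> 'v cnf" where
  "cross_clauses I J = (\<lambda>(i, j). {Pos i, Neg j}) ` (I \<times> J)"

definition bva_replace :: "'v cnf \<Rightarrow> 'v \<Rightarrow> 'v set \<Rightarrow> 'v set \<Rightarrow> 'v cnf" where
  "bva_replace \<Delta> Y I J =
     (\<Delta> - cross_clauses I J) \<union> (\<lambda>i. {Pos Y, Pos i}) ` I \<union> (\<lambda>j. {Neg Y, Neg j}) ` J"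

lemma mem_cross_clauses: "C \<in> cross_clauses I J \<longleftrightarrow> (\<exists>i\<in>I. \<exists>j\<in>J. C = {Pos i, Neg j})"
  unfolding cross_clauses_def by auto

lemma card_cross_clauses:
  assumes "finite I" "finite J"
  shows "card (cross_clauses I J) = card I * card J"
proof -
  have "inj_on (\<lambda>(i, j). {Pos i, Neg j}) (I \<times> J)"
    by (auto simp: inj_on_def doubleton_eq_iff)
  then show ?thesis using assms by (simp add: cross_clauses_def card_image card_cartesian_product)
qed

lemma resolvents_units:
  "resolvents ((\<lambda>i. {Pos i}) ` I) ((\<lambda>j. {Neg j}) ` J) = cross_clauses I J"
  unfolding resolvents_def cross_clauses_def by auto

lemma vars_iff: "x \<in> vars \<Delta> \<longleftrightarrow> (\<exists>C\<in>\<Delta>. x \<in> vars_cl C)"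
  unfolding vars_def by blast

lemma vars_memI: "C \<in> \<Delta> \<Longrightarrow> x \<in> vars_cl C \<Longrightarrow> x \<in> vars \<Delta>"
  unfolding vars_def by blast

lemma cross_clauses_vars:
  assumes "cross_clauses I J \<subseteq> \<Delta>" "I \<noteq> {}" "J \<noteq> {}"
  shows "I \<subseteq> vars \<Delta>" "J \<subseteq> vars \<Delta>"
proof -
  have clause: "{Pos i, Neg j} \<in> \<Delta>" if "i \<in> I" "j \<in> J" for i j
  proof -
    have "{Pos i, Neg j} \<in> cross_clauses I J" unfolding mem_cross_clauses using that by blast
    then show ?thesis using assms(1) by blast
  qed
  obtain i j where "i \<in> I" "j \<in> J" using assms(2,3) by blast
  have "vars_cl {Pos i', Neg j} \<subseteq> vars \<Delta>" "vars_cl {Pos i, Neg j'} \<subseteq> vars \<Delta>"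
    if "i' \<in> I" "j' \<in> J" for i' j'
    using clause[OF that(1) \<open>j \<in> J\<close>] clause[OF \<open>i \<in> I\<close> that(2)] unfolding vars_def by blast+
  then show "I \<subseteq> vars \<Delta>" "J \<subseteq> vars \<Delta>" using \<open>i \<in> I\<close> \<open>j \<in> J\<close> by auto
qed

lemma vars_bva_replace:
  assumes "cross_clauses I J \<subseteq> \<Delta>" "I \<noteq> {}" "J \<noteq> {}"
  shows "vars (bva_replace \<Delta> Y I J) = insert Y (vars \<Delta>)"
proof (intro equalityI subsetI)
  fix x assume "x \<in> vars (bva_replace \<Delta> Y I J)"
  then show "x \<in> insert Y (vars \<Delta>)"
    using cross_clauses_vars[OF assms] by (auto simp: vars_iff bva_replace_def)
next
  have pos: "{Pos Y, Pos i} \<in> bva_replace \<Delta> Y I J" if "i \<in> I" for i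
    using that by (simp add: bva_replace_def)
  have neg: "{Neg Y, Neg j} \<in> bva_replace \<Delta> Y I J" if "j \<in> J" for j
    using that by (simp add: bva_replace_def)
  fix x assume "x \<in> insert Y (vars \<Delta>)"
  then consider "x = Y" | C where "C \<in> \<Delta>" "x \<in> vars_cl C" by (metis insert_iff vars_iff)
  then show "x \<in> vars (bva_replace \<Delta> Y I J)"
  proof cases
    case 1
    obtain i where "i \<in> I" using assms(2) by blast
    then show ?thesis using 1 pos[of i] unfolding vars_iff by force
  next
    case (2 C)
    show ?thesis
    proof (cases "C \<in> cross_clauses I J")
      case True
      \<comment> \<open>the variables of a removed clause survive in the new clauses\<close>
      then obtain i j where "i \<in> I" "j \<in> J" "C = {Pos i, Neg j}" by (auto simp: mem_cross_clauses)
      then show ?thesis using 2 pos[of i] neg[of j] unfolding vars_iff by force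
    next
      case False
      then show ?thesis using 2 unfolding vars_iff bva_replace_def by blast
    qed
  qed
qed

lemma bva_step_cross_clauses:
  assumes fresh: "Y \<notin> vars \<Delta>" and fin: "finite I" "finite J" and sub: "cross_clauses I J \<subseteq> \<Delta>"
    and gain: "card I + card J < card I * card J"
  shows "bva_step \<Delta> (bva_replace \<Delta> Y I J)"
proof -
  define A where "A = (\<lambda>i. {Pos i}) ` I"
  define B where "B = (\<lambda>j. {Neg j}) ` J"
  have "I \<noteq> {}" "J \<noteq> {}" using gain by (metis card.empty mult_0 mult_0_right not_less0)+
  then have "I \<subseteq> vars \<Delta>" "J \<subseteq> vars \<Delta>" by (rule cross_clauses_vars[OF sub])+
  then have A: "\<forall>\<alpha>\<in>A. finite \<alpha> \<and> vars_cl \<alpha> \<subseteq> vars \<Delta>" and B: "\<forall>\<beta>\<in>B. finite \<beta> \<and> vars_cl \<beta> \<subseteq> vars \<Delta>"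
    by (auto simp: A_def B_def)
  have res: "resolvents A B = cross_clauses I J" unfolding A_def B_def by (rule resolvents_units)
  have "card (insert (Pos Y) ` A) \<le> card I" "card (insert (Neg Y) ` B) \<le> card J"
    unfolding A_def B_def image_image by (simp_all add: card_image_le fin)
  then have "card (insert (Pos Y) ` A) + card (insert (Neg Y) ` B) < card (resolvents A B)"
    using gain by (simp add: res card_cross_clauses fin)
  moreover have "bva_replace \<Delta> Y I J = \<Delta> - resolvents A B \<union> insert (Pos Y) ` A \<union> insert (Neg Y) ` B"
    unfolding res by (simp add: bva_replace_def A_def B_def image_image)
  moreover have "finite A" "finite B" using fin by (simp_all add: A_def B_def)
  ultimately show ?thesis
    unfolding bva_step_def using fresh A B sub res
    by (intro exI[of _ Y] exI[of _ A] exI[of _ B] conjI) simp_all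
qed

text \<open>
  Variables 0 and 1 are kept free for the two BVA steps, 2 to 6 carry the block
  \<open>{2, 3} \<times> {4, 5, 6}\<close> for the second step, and unit clauses on fresh variables pad the
  clause count to \<open>n\<^sup>3\<close>.
\<close>

definition clique_vars :: "nat \<Rightarrow> nat set" where
  "clique_vars n = {7..<n + 8}"

definition padding :: "nat \<Rightarrow> nat cnf" where
  "padding n = (\<lambda>k. {Pos k}) ` {n + 8..<n + 8 + (n ^ 3 - (n + 1) ^ 2 - 6)}"

definition hard_cnf :: "nat \<Rightarrow> nat cnf" where
  "hard_cnf n = cross_clauses (clique_vars n) (clique_vars n) \<union> cross_clauses {2, 3} {4, 5, 6} \<union> padding n"

definition reduced_cnf :: "nat \<Rightarrow> nat cnf" where
  "reduced_cnf n = bva_replace (bva_replace (hard_cnf n) 0 (clique_vars n) (clique_vars n)) 1 {2, 3} {4, 5, 6}"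

lemma card_clique_vars [simp]: "card (clique_vars n) = n + 1"
  by (simp add: clique_vars_def)

lemma finite_clique_vars [simp]: "finite (clique_vars n)"
  by (simp add: clique_vars_def)

lemma vars_hard_cnf_ge_2: "vars (hard_cnf n) \<subseteq> {2..}"
  by (auto simp: vars_iff hard_cnf_def padding_def clique_vars_def mem_cross_clauses)

lemma is_cnf_hard_cnf: "is_cnf (hard_cnf n)"
  by (auto simp: is_cnf_def hard_cnf_def padding_def cross_clauses_def)

lemma card_hard_cnf:
  assumes "n \<ge> 3"
  shows "card (hard_cnf n) = n ^ 3"
proof -
  let ?X = "cross_clauses (clique_vars n) (clique_vars n)" and ?S = "cross_clauses {2, 3} {4, 5, 6 :: nat}"
  have "(n + 1) ^ 2 + 6 \<le> n ^ 3"
  proof -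
    have "3 * n \<le> n * n" using assms by (rule mult_le_mono1)
    moreover have "3 * (n * n) \<le> n * (n * n)" using assms by (rule mult_le_mono1)
    moreover have "(n + 1) ^ 2 + 6 = n * n + 2 * n + 7" "n ^ 3 = n * (n * n)"
      by (simp_all add: power2_eq_square power3_eq_cube)
    ultimately show ?thesis using assms by linarith
  qed
  moreover have "card (padding n) = n ^ 3 - (n + 1) ^ 2 - 6"
    unfolding padding_def by (subst card_image) (auto simp: inj_on_def)
  moreover have "card ?X = (n + 1) ^ 2" by (simp add: card_cross_clauses power2_eq_square)
  moreover have "card ?S = 6" by (simp add: card_cross_clauses)
  moreover have "?X \<inter> ?S = {}"
    by (auto simp: mem_cross_clauses clique_vars_def doubleton_eq_iff)
  moreover have "(?X \<union> ?S) \<inter> padding n = {}"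
    by (auto simp: mem_cross_clauses padding_def)
  moreover have "finite ?X" "finite ?S" "finite (padding n)"
    by (simp_all add: cross_clauses_def padding_def)
  ultimately show ?thesis
    unfolding hard_cnf_def by (simp add: card_Un_disjoint)
qed

lemma primal_tw_hard_cnf: "n \<le> primal_tw (hard_cnf n)"
proof -
  have "\<forall>x\<in>clique_vars n. \<forall>y\<in>clique_vars n. \<exists>C\<in>hard_cnf n. {x, y} \<subseteq> vars_cl C"
  proof (intro ballI)
    fix x y assume "x \<in> clique_vars n" "y \<in> clique_vars n"
    then have "{Pos x, Neg y} \<in> cross_clauses (clique_vars n) (clique_vars n)"
      unfolding mem_cross_clauses by blast
    then have "{Pos x, Neg y} \<in> hard_cnf n" by (simp add: hard_cnf_def)
    then show "\<exists>C\<in>hard_cnf n. {x, y} \<subseteq> vars_cl C" by (intro bexI[of _ "{Pos x, Neg y}"]) simp_all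
  qed
  then have "card (clique_vars n) \<le> primal_tw (hard_cnf n) + 1"
    by (intro primal_tw_ge_clique is_cnf_hard_cnf) (auto simp: clique_vars_def)
  then show ?thesis by simp
qed

lemma bva_steps_hard_cnf:
  assumes "n \<ge> 3"
  shows "bva_step (hard_cnf n) (bva_replace (hard_cnf n) 0 (clique_vars n) (clique_vars n))"
    and "bva_step (bva_replace (hard_cnf n) 0 (clique_vars n) (clique_vars n)) (reduced_cnf n)"
proof -
  let ?\<Delta>1 = "bva_replace (hard_cnf n) 0 (clique_vars n) (clique_vars n)"
  have clique: "cross_clauses (clique_vars n) (clique_vars n) \<subseteq> hard_cnf n"
    unfolding hard_cnf_def by blast
  have "9 \<le> n * n" using mult_le_mono[of 3 n 3 n] assms by simp
  then have "(n + 1) + (n + 1) < (n + 1) * (n + 1)" by (simp add: algebra_simps)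
  moreover have "0 \<notin> vars (hard_cnf n)" "1 \<notin> vars (hard_cnf n)" using vars_hard_cnf_ge_2 by fastforce+
  ultimately show "bva_step (hard_cnf n) ?\<Delta>1"
    using clique by (intro bva_step_cross_clauses) auto
  have "cross_clauses {2, 3} {4, 5, 6} \<subseteq> ?\<Delta>1"
    by (auto simp: bva_replace_def hard_cnf_def mem_cross_clauses clique_vars_def doubleton_eq_iff)
  moreover have "vars ?\<Delta>1 = insert 0 (vars (hard_cnf n))"
    using clique by (rule vars_bva_replace) (auto simp: clique_vars_def)
  ultimately show "bva_step ?\<Delta>1 (reduced_cnf n)"
    unfolding reduced_cnf_def using \<open>1 \<notin> vars (hard_cnf n)\<close>
    by (intro bva_step_cross_clauses) (auto simp: card_insert_if)
qed

lemma primal_tw_reduced_cnf: "primal_tw (reduced_cnf n) \<le> 2"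
proof -
  have "reduced_cnf n \<subseteq> padding n \<union> (\<lambda>i. {Pos 0, Pos i}) ` clique_vars n \<union> (\<lambda>i. {Neg 0, Neg i}) ` clique_vars n
      \<union> (\<lambda>i. {Pos 1, Pos i}) ` {2, 3} \<union> (\<lambda>i. {Neg 1, Neg i}) ` {4, 5, 6}"
    by (auto simp: reduced_cnf_def bva_replace_def hard_cnf_def)
  then have "is_cnf (reduced_cnf n)" and hub: "\<forall>C\<in>reduced_cnf n. \<exists>v. vars_cl C \<subseteq> insert v {0, 1}"
    by (auto simp: is_cnf_def padding_def clique_vars_def intro: finite_subset)
  moreover have "{0, 1} \<subseteq> vars (reduced_cnf n)"
  proof -
    have "{Pos 0, Pos 7} \<notin> cross_clauses {2, 3} {4, 5, 6 :: nat}" by (auto simp: mem_cross_clauses)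
    then have "{Pos 0, Pos 7} \<in> reduced_cnf n"
      by (simp add: reduced_cnf_def bva_replace_def clique_vars_def)
    moreover have "{Pos 1, Pos 2} \<in> reduced_cnf n" by (simp add: reduced_cnf_def bva_replace_def)
    ultimately show ?thesis using vars_memI[of _ "reduced_cnf n"] by fastforce
  qed
  ultimately show ?thesis using primal_tw_le_hub[of "reduced_cnf n" "{0, 1}"] by simp
qed

theorem theorem5:
  shows "\<exists>\<Delta> :: nat \<Rightarrow> nat cnf. \<forall>n\<ge>3.
           is_cnf (\<Delta> n) \<and> card (\<Delta> n) = n ^ 3 \<and>
           n \<le> primal_tw (\<Delta> n) \<and>
           (\<exists>\<Delta>1 \<Delta>2. bva_step (\<Delta> n) \<Delta>1 \<and> bva_step \<Delta>1 \<Delta>2 \<and> primal_tw \<Delta>2 \<le> 2)"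
proof (intro exI[of _ hard_cnf] allI impI conjI)
  fix n :: nat assume n: "n \<ge> 3"
  show "is_cnf (hard_cnf n)" by (rule is_cnf_hard_cnf)
  show "card (hard_cnf n) = n ^ 3" using n by (rule card_hard_cnf)
  show "n \<le> primal_tw (hard_cnf n)" by (rule primal_tw_hard_cnf)
  show "\<exists>\<Delta>1 \<Delta>2. bva_step (hard_cnf n) \<Delta>1 \<and> bva_step \<Delta>1 \<Delta>2 \<and> primal_tw \<Delta>2 \<le> 2"
    using bva_steps_hard_cnf[OF n] primal_tw_reduced_cnf by blast
qed

end
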